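(* Let $\mathfrak{D}\subset\mathbb{R}^{m\times d}$ and let $g$ be a penalty. Assume one of the following: (I) $g$ satisfies A1–A4, or $(g,\mathfrak{D})$ satisfy B1–B4; or (II) $(g,\mathfrak{D})$ satisfy B1–B3. Set $D_0=1$ in case (I) and $D_0=\max(1/\kappa,1)$ in case (II) (with $\kappa$ from B2). Let $\mathbb{P}$ be a distribution on $\mathbb{R}^m$ satisfying C1 and C2 with constants $c>0$, $T\in(0,+\infty]$. Assume there are constants $C\ge1$, $h\ge1$ such that $\mathcal{N}(\mathfrak{D},\epsilon)\le (C/\epsilon)^h$ for all $0<\epsilon\le1$. Let $L>L_{\mathbb{P}}(\bar g)$ and define $\beta\triangleq h\cdot\max\big(\log\tfrac{2LC}{c},1\big)$. Assume the sample size $n$ satisfies $$\frac{n}{\log n}\ \ge\ \max\Big(8,\ \frac{\beta}{T^2},\ D_0\Big(\frac{c}{2L}\Big)^2\beta\Big)$$ (with $\beta/T^2=0$ if $T=\infty$). Then for every $x$ with $0\le x\le nT^2-\beta\log n$, if $x_1,\dots,x_n$ are drawn i.i.d. from $\mathbb{P}$ and $X=[x_1,\dots,x_n]$, we have, except with probability at most $\Lambda_n(L)+2e^{-x}$, $$\sup_{D\in\mathfrak{D}}\big|F_X(D)-\mathbb{E}_{x\sim\mathbb{P}}f_x(D)\big|\le \eta_n,$$ where $\eta_n=2c\sqrt{\frac{\beta\log n}{n}}+c\sqrt{\frac{\beta+x}{n}}$ in case (I) and $\eta_n=3c\sqrt{\frac{\beta\log n}{n}}+c\sqrt{\frac{\beta+x}{n}}$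 in case (II).
   Context: Let $m,d,n\ge1$. A penalty is a function $g:\mathbb{R}^d\to\mathbb{R}\cup\{+\infty\}$, not identically $+\infty$. For $x\in\mathbb{R}^m$, $D\in\mathbb{R}^{m\times d}$, $\alpha\in\mathbb{R}^d$ let $\mathcal{L}_x(D,\alpha)=\tfrac12\|x-D\alpha\|_2^2+g(\alpha)$ and $f_x(D)=\inf_{\alpha\in\mathbb{R}^d}\mathcal{L}_x(D,\alpha)$. For $X=[x_1,\dots,x_n]\in\mathbb{R}^{m\times n}$ let $F_X(D)=\frac1n\sum_{i=1}^n f_{x_i}(D)$. For $\Delta=[\delta_1,\dots,\delta_d]\in\mathbb{R}^{m\times d}$, $\|\Delta\|_{1\to2}=\sup_{\|\alpha\|_1\le1}\|\Delta\alpha\|_2=\max_j\|\delta_j\|_2$. Assumptions on $g$: A1: $g\ge0$; A2: $g$ is lower semi-continuous; A3: $g$ is coercive, i.e. $g(\alpha)\to+\infty$ as $\|\alpha\|\to\infty$; A4: $g(0)=0$. Joint assumptions on $g$ and a set $\mathfrak{D}\subset\mathbb{R}^{m\times d}$: B1: $g=\chi_{\mathcal K}$ is the indicator of a set $\mathcal K\subset\mathbb{R}^d$ ($0$ on $\mathcal K$, $+\infty$ outside); B2: there is $\kappa>0$ with $\kappa\|\alpha\|_1^2\le\|D\alpha\|_2^2$ for all $\alpha\in\mathcal K$, $D\in\mathfrak{D}$; B3: $0\in\mathcal K$; B4: $\mathfrak{D}$ is convex. The function $\bar g:[0,\infty)\to[0,\infty)$: under A1–A3, $\bar g(t)=\sup\{\|\alpha\|_1:\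 g(\alpha)\le t\}$ (with $\sup\emptyset=0$); under B1–B3, $\bar g(t)=2\sqrt{2t/\kappa}$. For $X=[x_1,\dots,x_n]$, $L_X(\bar g)=\frac1n\sum_{i=1}^n\|x_i\|_2\,\bar g(\|x_i\|_2^2/2)$. Probabilistic notions: $\mathbb{P}$ is a probability distribution on $\mathbb{R}^m$ and $x_1,\dots,x_n$ are i.i.d. with law $\mathbb{P}$, $X=[x_1,\dots,x_n]$. $L_{\mathbb{P}}(\bar g)=\mathbb{E}_{x\sim\mathbb{P}}\|x\|_2\bar g(\|x\|_2^2/2)$. $\Lambda_n(L)=\mathbb{P}(L_X(\bar g)>L)$. $\Gamma_n(\gamma)=\sup_{D\in\mathfrak{D}}\mathbb{P}\big(|F_X(D)-\mathbb{E}f_x(D)|>\gamma\big)$. C1: $L_{\mathbb{P}}(\bar g)<+\infty$. C2: there are $c>0$ and $T\in(0,+\infty]$ such that $\Gamma_n(c\tau)\le2\exp(-n\tau^2)$ for all $0\le\tau\le T$ and all $n$. Covering number: $\mathcal{N}(\mathfrak{D},\epsilon)$ is the minimal cardinality of a set $\mathfrak{Q}\subset\mathfrak{D}$ such that every $D\in\mathfrak{D}$ satisfies $\|D-q\|_{1\to2}\le\epsilon$ for some $q\in\mathfrak{Q}$. *)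

theory Defs
  imports "HOL-Analysis.Analysis" "HOL-Probability.Probability"
begin

text \<open>Vectors in R^d are real^'d, vectors in R^m are real^'m, and an m x d matrix
  D is real^'d^'m (m rows, d columns), acting by D *v alpha.\<close>

definition norm1 :: "real^'d \<Rightarrow> real" where
  "norm1 a = (\<Sum>j\<in>UNIV. \<bar>a $ j\<bar>)"

definition norm12 :: "real^'d^'m \<Rightarrow> real" where
  "norm12 Delta = Max (range (\<lambda>j. norm (column j Delta)))"

definition is_penalty :: "(real^'d \<Rightarrow> ereal) \<Rightarrow> bool" where
  "is_penalty g \<longleftrightarrow> (\<forall>a. g a \<noteq> -\<infinity>) \<and> (\<exists>a. g a \<noteq> \<infinity>)"

definition lsc_fun :: "(real^'d \<Rightarrow> ereal) \<Rightarrow> bool" where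
  "lsc_fun g \<longleftrightarrow> (\<forall>a s. s \<longlonglongrightarrow> a \<longrightarrow> g a \<le> liminf (\<lambda>k. g (s k)))"

definition assmA :: "(real^'d \<Rightarrow> ereal) \<Rightarrow> bool" where
  "assmA g \<longleftrightarrow> (\<forall>a. 0 \<le> g a) \<and> lsc_fun g \<and> (g \<longlongrightarrow> \<infinity>) at_infinity \<and> g 0 = 0"

definition assmB123 :: "(real^'d \<Rightarrow> ereal) \<Rightarrow> (real^'d^'m) set \<Rightarrow> real \<Rightarrow> bool" where
  "assmB123 g DD kappa \<longleftrightarrow>
     (\<exists>K. (\<forall>a. g a = (if a \<in> K then 0 else \<infinity>))
        \<and> (\<forall>a\<in>K. \<forall>D\<in>DD. kappa * (norm1 a)\<^sup>2 \<le> (norm (D *v a))\<^sup>2)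
        \<and> 0 \<in> K) \<and> 0 < kappa"

definition loss :: "(real^'d \<Rightarrow> ereal) \<Rightarrow> real^'m \<Rightarrow> real^'d^'m \<Rightarrow> real^'d \<Rightarrow> ereal" where
  "loss g x D a = ereal ((norm (x - D *v a))\<^sup>2 / 2) + g a"

definition fx :: "(real^'d \<Rightarrow> ereal) \<Rightarrow> real^'m \<Rightarrow> real^'d^'m \<Rightarrow> real" where
  "fx g x D = real_of_ereal (INF a. loss g x D a)"

definition FX :: "(real^'d \<Rightarrow> ereal) \<Rightarrow> nat \<Rightarrow> (nat \<Rightarrow> real^'m) \<Rightarrow> real^'d^'m \<Rightarrow> real" where
  "FX g n X D = (1 / real n) * (\<Sum>i<n. fx g (X i) D)"

definition gbarA :: "(real^'d \<Rightarrow> ereal) \<Rightarrow> real \<Rightarrow> real" where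
  "gbarA g t = (let S = {norm1 a | a. g a \<le> ereal t} in if S = {} then 0 else Sup S)"

definition gbarB :: "real \<Rightarrow> real \<Rightarrow> real" where
  "gbarB kappa t = 2 * sqrt (2 * t / kappa)"

definition LX :: "(real \<Rightarrow> real) \<Rightarrow> nat \<Rightarrow> (nat \<Rightarrow> real^'m) \<Rightarrow> real" where
  "LX gbar n X = (1 / real n) * (\<Sum>i<n. norm (X i) * gbar ((norm (X i))\<^sup>2 / 2))"

definition LP :: "(real \<Rightarrow> real) \<Rightarrow> (real^'m) measure \<Rightarrow> ennreal" where
  "LP gbar P = (\<integral>\<^sup>+ x. ennreal (norm x * gbar ((norm x)\<^sup>2 / 2)) \<partial>P)"

definition sample :: "(real^'m) measure \<Rightarrow> nat \<Rightarrow> (nat \<Rightarrow> real^'m) measure" where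
  "sample P n = PiM {..<n} (\<lambda>_. P)"

definition Lambda :: "(real \<Rightarrow> real) \<Rightarrow> (real^'m) measure \<Rightarrow> nat \<Rightarrow> real \<Rightarrow> real" where
  "Lambda gbar P n L = measure (sample P n) {X \<in> space (sample P n). LX gbar n X > L}"

definition Ef :: "(real^'d \<Rightarrow> ereal) \<Rightarrow> (real^'m) measure \<Rightarrow> real^'d^'m \<Rightarrow> real" where
  "Ef g P D = (\<integral>x. fx g x D \<partial>P)"

text \<open>C2 (Gamma_n(c tau) <= 2 exp(-n tau^2), with the sup over D unfolded). T may be infinite.\<close>
definition condC2 :: "(real^'d \<Rightarrow> ereal) \<Rightarrow> (real^'d^'m) set \<Rightarrow> (real^'m) measure \<Rightarrow> real \<Rightarrow> ereal \<Rightarrow> bool" where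
  "condC2 g DD P c T \<longleftrightarrow> (\<forall>n tau D. D \<in> DD \<longrightarrow> 0 \<le> tau \<longrightarrow> ereal tau \<le> T \<longrightarrow>
      measure (sample P n) {X \<in> space (sample P n). \<bar>FX g n X D - Ef g P D\<bar> > c * tau}
        \<le> 2 * exp (- real n * tau\<^sup>2))"

text \<open>Covering number w.r.t. the 1->2 norm; infinity if no finite cover exists.\<close>
definition covering_number :: "(real^'d^'m) set \<Rightarrow> real \<Rightarrow> ereal" where
  "covering_number DD eps = Inf {ereal (card Q) | Q. Q \<subseteq> DD \<and> finite Q \<and>
       (\<forall>D\<in>DD. \<exists>q\<in>Q. norm12 (D - q) \<le> eps)}"

text \<open>The three scenarios: (I) with A1--A4, (I) with B1--B4, (II) with B1--B3.
  Each fixes g-bar, D_0 and the leading constant a in eta_n (2 in case I, 3 in case II).\<close>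
definition scenario :: "(real^'d \<Rightarrow> ereal) \<Rightarrow> (real^'d^'m) set \<Rightarrow> (real \<Rightarrow> real) \<Rightarrow> real \<Rightarrow> real \<Rightarrow> bool" where
  "scenario g DD gbar D0 a \<longleftrightarrow>
     (assmA g \<and> gbar = gbarA g \<and> D0 = 1 \<and> a = 2)
   \<or> (\<exists>kappa. assmB123 g DD kappa \<and> convex DD \<and> gbar = gbarB kappa \<and> D0 = 1 \<and> a = 2)
   \<or> (\<exists>kappa. assmB123 g DD kappa \<and> gbar = gbarB kappa \<and> D0 = max (1 / kappa) 1 \<and> a = 3)"

end

theory Submission
  imports Defs
begin

text \<open>For fixed \<open>x\<close>, \<open>D \<mapsto> f\<^sub>x(D)\<close> is Lipschitz for the \<open>1\<rightarrow>2\<close> norm with constant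
  \<open>\<parallel>x\<parallel> gbar(\<parallel>x\<parallel>\<^sup>2/2)\<close>: a (near) minimizer \<open>\<alpha>\<close> for \<open>D\<^sub>2\<close> has \<open>\<parallel>\<alpha>\<parallel>\<^sub>1 \<le> gbar(\<parallel>x\<parallel>\<^sup>2/2)\<close> and is a
  competitor for \<open>D\<^sub>1\<close>, which gives the Lipschitz bound up to a quadratic remainder in
  \<open>\<parallel>D\<^sub>1 - D\<^sub>2\<parallel>\<close>. On a convex domain the remainder disappears by subdividing segments; in case (II)
  it is kept and costs the third term \<open>c \<surd>(\<beta> log n / n)\<close>.

  Then take an \<open>\<epsilon>\<close>-net \<open>Q\<close> of the dictionaries with \<open>\<epsilon> = c s / (2L)\<close>, \<open>s = \<surd>(\<beta> log n / n)\<close>, so that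
  \<open>|Q| \<le> (C/\<epsilon>)\<^sup>h\<close>. Outside the event that \<open>L\<^sub>X > L\<close> or some net point deviates by more than
  \<open>c \<tau>\<close>, \<open>\<tau> = \<surd>((x + h log (C/\<epsilon>)) / n)\<close>, every \<open>D\<close> deviates by at most \<open>c \<tau> + 2 L \<epsilon>\<close> (plus the
  remainder), because both the empirical and the true mean of the Lipschitz constants are at most \<open>L\<close>.
  A union bound with C2 makes that event have probability at most \<open>\<Lambda>\<^sub>n(L) + |Q| 2 exp(-n \<tau>\<^sup>2) =
  \<Lambda>\<^sub>n(L) + 2 exp(-x)\<close>, and the sample size conditions make \<open>\<epsilon> \<le> 1\<close>, \<open>\<tau> \<le> T\<close> and
  \<open>c \<tau> \<le> c \<surd>((\<beta> + x)/n) + c s\<close>.\<close>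

lemma norm12_column_le: "norm (column j M) \<le> norm12 M"
  unfolding norm12_def by (intro Max_ge) auto

lemma norm12_nonneg: "0 \<le> norm12 M"
  using norm12_column_le[of _ M] norm_ge_zero order_trans by blast

lemma norm1_nonneg: "0 \<le> norm1 a"
  unfolding norm1_def by (intro sum_nonneg) auto

lemma norm1_le_card_norm: "norm1 (a::real^'d) \<le> real CARD('d) * norm a"
proof -
  have "norm1 a \<le> (\<Sum>j\<in>(UNIV::'d set). norm a)"
    unfolding norm1_def by (intro sum_mono component_le_norm_cart)
  then show ?thesis by simp
qed

lemma norm_matrix_vector_le_norm12: "norm ((M::real^'d^'m) *v a) \<le> norm12 M * norm1 a"
proof -
  have "norm (M *v a) = norm (\<Sum>i\<in>UNIV. (a$i) *s column i M)"
    by (simp add: matrix_mult_sum)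
  also have "\<dots> \<le> (\<Sum>i\<in>UNIV. norm ((a$i) *s column i M))"
    by (rule norm_sum)
  also have "\<dots> = (\<Sum>i\<in>UNIV. \<bar>a$i\<bar> * norm (column i M))"
    by (simp add: scalar_mult_eq_scaleR)
  also have "\<dots> \<le> (\<Sum>i\<in>UNIV. \<bar>a$i\<bar> * norm12 M)"
    by (intro sum_mono mult_left_mono norm12_column_le) auto
  also have "\<dots> = norm12 M * norm1 a"
    by (simp add: norm1_def sum_distrib_left mult.commute)
  finally show ?thesis .
qed

lemma norm12_scaleR: "norm12 (c *\<^sub>R (M::real^'d^'m)) = \<bar>c\<bar> * norm12 M"
proof -
  have "range (\<lambda>j. norm (column j (c *\<^sub>R M))) = (\<lambda>y. \<bar>c\<bar> * y) ` range (\<lambda>j. norm (column j M))"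
  proof -
    have "column j (c *\<^sub>R M) = c *\<^sub>R column j M" for j
      by (simp add: column_def vec_eq_iff)
    then show ?thesis by auto
  qed
  moreover have "Max ((\<lambda>y. \<bar>c\<bar> * y) ` range (\<lambda>j. norm (column j M)))
      = \<bar>c\<bar> * Max (range (\<lambda>j. norm (column j M)))"
    by (rule mono_Max_commute[symmetric]) (auto simp: mono_def mult_left_mono)
  ultimately show ?thesis unfolding norm12_def by simp
qed

lemma norm12_zero [simp]: "norm12 (0::real^'d^'m) = 0"
  using norm12_scaleR[of 0 "0::real^'d^'m"] by simp

lemma norm12_minus_commute: "norm12 (A - B) = norm12 (B - (A::real^'d^'m))"
proof -
  have "B - A = (-1) *\<^sub>R (A - B)" by simp
  then show ?thesis using norm12_scaleR[of "-1" "A - B"] by simp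
qed

lemma le_tendsto_at_right_0:
  fixes k :: "real \<Rightarrow> real"
  assumes "\<And>\<epsilon>. 0 < \<epsilon> \<Longrightarrow> A \<le> k \<epsilon>" and "(k \<longlongrightarrow> k0) (at_right 0)"
  shows "A \<le> k0"
proof (rule tendsto_lowerbound[OF assms(2)])
  show "\<forall>\<^sub>F x in at_right 0. A \<le> k x"
    unfolding eventually_at_right_field using assms(1) by (intro exI[of _ 1]) auto
qed simp

locale nonneg_penalty =
  fixes g :: "real^'d \<Rightarrow> ereal"
  assumes g_nonneg: "\<And>a. 0 \<le> g a" and g_zero: "g 0 = 0"
begin

lemma INF_loss_bounds:
  "0 \<le> (INF a. loss g x D a)" "(INF a. loss g x D a) \<le> ereal ((norm x)\<^sup>2 / 2)"
proof -
  show "0 \<le> (INF a. loss g x D a)"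
    by (rule INF_greatest) (simp add: loss_def g_nonneg)
  have "(INF a. loss g x D a) \<le> loss g x D 0" by (rule INF_lower) simp
  then show "(INF a. loss g x D a) \<le> ereal ((norm x)\<^sup>2 / 2)"
    by (simp add: loss_def g_zero)
qed

lemma ereal_fx: "ereal (fx g x D) = (INF a. loss g x D a)"
proof -
  have "(INF a. loss g x D a) \<noteq> \<infinity>" "(INF a. loss g x D a) \<noteq> -\<infinity>"
    using INF_loss_bounds[of x D] by auto
  then show ?thesis unfolding fx_def by (cases "(INF a. loss g x D a)") auto
qed

lemma fx_le_half_sq_norm: "fx g x D \<le> (norm x)\<^sup>2 / 2"
  using INF_loss_bounds(2)[of x D] ereal_fx[of x D, symmetric] by simp

lemma fx_le_loss: assumes "g a = ereal \<gamma>" shows "fx g x D \<le> (norm (x - D *v a))\<^sup>2 / 2 + \<gamma>"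
proof -
  have "ereal (fx g x D) \<le> loss g x D a" unfolding ereal_fx by (rule INF_lower) simp
  then show ?thesis using assms by (simp add: loss_def)
qed

lemma exists_approx_minimizer:
  assumes "0 < \<epsilon>"
  obtains a \<gamma> where "g a = ereal \<gamma>" "0 \<le> \<gamma>" "(norm (x - D *v a))\<^sup>2 / 2 + \<gamma> < fx g x D + \<epsilon>"
proof -
  have "(INF a. loss g x D a) < ereal (fx g x D + \<epsilon>)"
    unfolding ereal_fx[symmetric] using assms by simp
  then obtain a where a: "loss g x D a < ereal (fx g x D + \<epsilon>)"
    by (auto simp: INF_less_iff)
  then have "g a \<noteq> \<infinity>" by (auto simp: loss_def)
  moreover have "g a \<noteq> -\<infinity>" using g_nonneg[of a] by auto
  ultimately obtain \<gamma> where \<gamma>: "g a = ereal \<gamma>" by (cases "g a") auto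
  have "0 \<le> \<gamma>" using g_nonneg[of a] \<gamma> by simp
  with a \<gamma> show ?thesis by (intro that) (auto simp: loss_def)
qed

lemma approx_minimizer_residual_le:
  assumes "g a = ereal \<gamma>" "0 \<le> \<gamma>" "(norm (x - D *v a))\<^sup>2 / 2 + \<gamma> \<le> fx g x D + \<epsilon>"
  shows "norm (x - D *v a) \<le> sqrt ((norm x)\<^sup>2 + 2 * \<epsilon>)"
proof -
  have "(norm (x - D *v a))\<^sup>2 \<le> (norm x)\<^sup>2 + 2 * \<epsilon>" using assms fx_le_half_sq_norm[of x D] by simp
  then show ?thesis by (simp add: real_le_rsqrt)
qed

text \<open>The \<open>\<epsilon>\<close>-minimizer \<open>a\<close> for \<open>(x\<^sub>2, D\<^sub>2)\<close> is a competitor for \<open>(x\<^sub>1, D\<^sub>1)\<close>; its residual changes by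
  at most \<open>e\<close>.\<close>
lemma fx_perturb_le:
  fixes x1 x2 :: "real^'m" and D1 D2 :: "real^'d^'m"
  assumes "g a = ereal \<gamma>"
    and "(norm (x2 - D2 *v a))\<^sup>2 / 2 + \<gamma> \<le> fx g x2 D2 + \<epsilon>"
  defines "e \<equiv> norm (x1 - x2) + norm12 (D1 - D2) * norm1 a"
  shows "fx g x1 D1 \<le> fx g x2 D2 + \<epsilon> + norm (x2 - D2 *v a) * e + e\<^sup>2 / 2"
proof -
  define r where "r = norm (x2 - D2 *v a)"
  have eq: "x1 - D1 *v a = (x2 - D2 *v a) + ((x1 - x2) - (D1 - D2) *v a)"
    by (simp add: matrix_vector_mult_diff_rdistrib algebra_simps)
  have "norm ((x1 - x2) - (D1 - D2) *v a) \<le> norm (x1 - x2) + norm ((D1 - D2) *v a)"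
    by (rule norm_triangle_ineq4)
  also have "\<dots> \<le> e" unfolding e_def using norm_matrix_vector_le_norm12[of "D1 - D2" a] by simp
  finally have "norm (x1 - D1 *v a) \<le> r + e"
    unfolding eq r_def using norm_triangle_ineq order_trans add_left_mono by blast
  then have "(norm (x1 - D1 *v a))\<^sup>2 \<le> (r + e)\<^sup>2"
    by (intro power_mono) auto
  moreover have "fx g x1 D1 \<le> (norm (x1 - D1 *v a))\<^sup>2 / 2 + \<gamma>" by (rule fx_le_loss[OF assms(1)])
  moreover have "r\<^sup>2 / 2 + \<gamma> \<le> fx g x2 D2 + \<epsilon>" using assms(2) r_def by simp
  ultimately have "fx g x1 D1 \<le> fx g x2 D2 + \<epsilon> + ((r + e)\<^sup>2 / 2 - r\<^sup>2 / 2)" by simp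
  also have "(r + e)\<^sup>2 / 2 - r\<^sup>2 / 2 = r * e + e\<^sup>2 / 2" by (simp add: power2_eq_square algebra_simps)
  finally show ?thesis unfolding r_def by simp
qed

lemma fx_dictionary_perturb_le:
  assumes "g a = ereal \<gamma>" "(norm (x - D2 *v a))\<^sup>2 / 2 + \<gamma> \<le> fx g x D2 + \<epsilon>"
    and "norm (x - D2 *v a) \<le> r" "norm1 a \<le> G"
  shows "fx g x D1 \<le> fx g x D2 + \<epsilon> + r * G * norm12 (D1 - D2) + G\<^sup>2 / 2 * (norm12 (D1 - D2))\<^sup>2"
proof -
  define \<delta> where "\<delta> = norm12 (D1 - D2)"
  have d0: "0 \<le> \<delta>" unfolding \<delta>_def by (rule norm12_nonneg)
  have st: "fx g x D1 \<le> fx g x D2 + \<epsilon> + norm (x - D2 *v a) * (\<delta> * norm1 a) + (\<delta> * norm1 a)\<^sup>2 / 2"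
    using fx_perturb_le[OF assms(1,2), of x D1] unfolding \<delta>_def by simp
  have e: "\<delta> * norm1 a \<le> \<delta> * G" using assms(4) d0 by (rule mult_left_mono)
  have e0: "0 \<le> \<delta> * norm1 a" using d0 norm1_nonneg[of a] by simp
  have "norm (x - D2 *v a) * (\<delta> * norm1 a) \<le> r * (\<delta> * G)"
    by (rule mult_mono[OF assms(3) e order_trans[OF norm_ge_zero assms(3)] e0])
  moreover have "(\<delta> * norm1 a)\<^sup>2 \<le> (\<delta> * G)\<^sup>2" using e e0 by (rule power_mono)
  ultimately have "fx g x D1 \<le> fx g x D2 + \<epsilon> + r * (\<delta> * G) + (\<delta> * G)\<^sup>2 / 2" using st by simp
  then show ?thesis unfolding \<delta>_def[symmetric] by (simp add: power_mult_distrib algebra_simps)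
qed

lemma fx_sample_perturb_le:
  "fx g x1 D \<le> fx g x2 D + norm x2 * norm (x1 - x2) + (norm (x1 - x2))\<^sup>2 / 2"
proof -
  define e where "e = norm (x1 - x2)"
  define k where "k \<epsilon> = fx g x2 D + \<epsilon> + sqrt ((norm x2)\<^sup>2 + 2 * \<epsilon>) * e + e\<^sup>2 / 2" for \<epsilon>
  have "fx g x1 D \<le> k \<epsilon>" if pos: "0 < \<epsilon>" for \<epsilon>
  proof -
    obtain a \<gamma> where a: "g a = ereal \<gamma>" "0 \<le> \<gamma>" "(norm (x2 - D *v a))\<^sup>2 / 2 + \<gamma> < fx g x2 D + \<epsilon>"
      using exists_approx_minimizer[OF pos] by blast
    have "fx g x1 D \<le> fx g x2 D + \<epsilon> + norm (x2 - D *v a) * e + e\<^sup>2 / 2"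
      using fx_perturb_le[OF a(1) less_imp_le[OF a(3)], of x1 D] by (simp add: e_def)
    moreover have "norm (x2 - D *v a) * e \<le> sqrt ((norm x2)\<^sup>2 + 2 * \<epsilon>) * e"
      using approx_minimizer_residual_le[OF a(1,2) less_imp_le[OF a(3)]]
      by (rule mult_right_mono) (simp add: e_def)
    ultimately show ?thesis unfolding k_def by simp
  qed
  moreover have "(k \<longlongrightarrow> k 0) (at_right 0)"
    unfolding k_def by (intro tendsto_intros)
  ultimately have "fx g x1 D \<le> k 0" by (rule le_tendsto_at_right_0)
  then show ?thesis unfolding k_def e_def by simp
qed

lemma isCont_fx: "isCont (\<lambda>x. fx g x D) x0"
proof -
  define b where "b y = (norm x0 + norm (y - x0)) * norm (y - x0) + (norm (y - x0))\<^sup>2 / 2" for y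
  have bnd: "norm (fx g y D - fx g x0 D) \<le> b y" for y
  proof -
    have 1: "fx g y D - fx g x0 D \<le> norm x0 * norm (y - x0) + (norm (y - x0))\<^sup>2 / 2"
      using fx_sample_perturb_le[of y D x0] by simp
    have 2: "fx g x0 D - fx g y D \<le> norm y * norm (y - x0) + (norm (y - x0))\<^sup>2 / 2"
      using fx_sample_perturb_le[of x0 D y] by (simp add: norm_minus_commute)
    have "norm y \<le> norm x0 + norm (y - x0)" using norm_triangle_ineq[of x0 "y - x0"] by simp
    then have "norm y * norm (y - x0) \<le> (norm x0 + norm (y - x0)) * norm (y - x0)"
      by (rule mult_right_mono) simp
    moreover have "norm x0 * norm (y - x0) \<le> (norm x0 + norm (y - x0)) * norm (y - x0)"
      by (intro mult_right_mono) auto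
    ultimately show ?thesis unfolding b_def real_norm_def abs_le_iff using 1 2 by linarith
  qed
  have "((\<lambda>y. norm (y - x0)) \<longlongrightarrow> 0) (at x0)"
    using tendsto_norm_zero[OF LIM_zero[OF tendsto_ident_at[of x0 UNIV]]] .
  then have "(b \<longlongrightarrow> (norm x0 + 0) * 0 + 0\<^sup>2 / 2) (at x0)"
    unfolding b_def by (intro tendsto_intros) simp_all
  then have blim: "(b \<longlongrightarrow> 0) (at x0)" by simp
  have "((\<lambda>y. fx g y D - fx g x0 D) \<longlongrightarrow> 0) (at x0)"
    by (rule Lim_null_comparison[OF always_eventually blim]) (use bnd in blast)
  then show ?thesis unfolding isCont_def by (simp add: LIM_zero_cancel)
qed

lemma borel_measurable_fx: "(\<lambda>x. fx g x D) \<in> borel_measurable borel"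
  by (intro borel_measurable_continuous_onI continuous_at_imp_continuous_on ballI isCont_fx)

end

text \<open>Applied along \<open>N\<close> equal steps of the segment from \<open>D\<^sub>2\<close> to \<open>D\<^sub>1\<close>, the quadratic remainder adds
  up to \<open>B \<delta>\<^sup>2 / N\<close>, which vanishes as \<open>N \<rightarrow> \<infinity>\<close>.\<close>
lemma convex_quadratic_bound_imp_lipschitz:
  fixes F :: "real^'d^'m \<Rightarrow> real"
  assumes S: "convex S" and B: "0 \<le> B"
    and bound: "\<And>D1 D2. D1 \<in> S \<Longrightarrow> D2 \<in> S \<Longrightarrow>
      F D1 \<le> F D2 + A * norm12 (D1 - D2) + B * (norm12 (D1 - D2))\<^sup>2"
    and D: "D1 \<in> S" "D2 \<in> S"
  shows "F D1 \<le> F D2 + A * norm12 (D1 - D2)"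
proof -
  define \<delta> where "\<delta> = norm12 (D1 - D2)"
  have steps: "F D1 - F D2 - A * \<delta> \<le> B * \<delta>\<^sup>2 / real (Suc N)" for N
  proof -
    define M where "M = Suc N"
    have M0: "0 < real M" unfolding M_def by simp
    define P where "P k = D2 + (real k / real M) *\<^sub>R (D1 - D2)" for k
    have PS: "P k \<in> S" if "k \<le> M" for k
    proof -
      have u: "0 \<le> real k / real M" "real k / real M \<le> 1" using that M0 by auto
      have "P k = (1 - real k / real M) *\<^sub>R D2 + (real k / real M) *\<^sub>R D1"
        unfolding P_def by (simp add: algebra_simps)
      then show ?thesis using convexD[OF S D(2) D(1), of "1 - real k / real M" "real k / real M"] u by simp
    qed
    have step: "P (Suc k) - P k = (1 / real M) *\<^sub>R (D1 - D2)" for k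
      unfolding P_def using M0 by (simp add: algebra_simps add_divide_distrib scaleR_add_left)
    have step_norm: "norm12 (P (Suc k) - P k) = \<delta> / real M" for k
      unfolding step norm12_scaleR \<delta>_def by simp
    have "F D1 - F D2 = (\<Sum>k<M. F (P (Suc k)) - F (P k))"
      by (subst sum_lessThan_telescope) (use M0 in \<open>simp add: P_def\<close>)
    also have "\<dots> \<le> (\<Sum>k<M. A * (\<delta> / real M) + B * (\<delta> / real M)\<^sup>2)"
    proof (rule sum_mono)
      fix k assume "k \<in> {..<M}"
      then show "F (P (Suc k)) - F (P k) \<le> A * (\<delta> / real M) + B * (\<delta> / real M)\<^sup>2"
        using bound[OF PS PS, of "Suc k" k] step_norm[of k] by simp
    qed
    also have "\<dots> = A * \<delta> + B * \<delta>\<^sup>2 / real M"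
      using M0 by (simp add: power2_eq_square field_simps)
    finally show ?thesis unfolding M_def by simp
  qed
  have "(\<lambda>N. B * \<delta>\<^sup>2 / real (Suc N)) \<longlonglongrightarrow> 0"
    using LIMSEQ_Suc[OF lim_const_over_n[of "B * \<delta>\<^sup>2"]] by simp
  then have "F D1 - F D2 - A * \<delta> \<le> 0"
    by (rule LIMSEQ_le_const) (use steps in blast)
  then show ?thesis unfolding \<delta>_def by simp
qed

locale coercive_penalty = nonneg_penalty g for g :: "real^'d \<Rightarrow> ereal" +
  assumes g_lsc: "lsc_fun g" and g_coercive: "(g \<longlongrightarrow> \<infinity>) at_infinity"
begin

lemma sublevel_bounded: "\<exists>R. \<forall>a. g a \<le> ereal t \<longrightarrow> norm a \<le> R"
proof -
  have "eventually (\<lambda>a. ereal t < g a) at_infinity"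
    using g_coercive unfolding tendsto_PInfty by blast
  then obtain R where "\<forall>a. R \<le> norm a \<longrightarrow> ereal t < g a"
    unfolding eventually_at_infinity by blast
  then show ?thesis by (intro exI[of _ R]) (meson linorder_not_le less_le_not_le)
qed

lemma norm1_le_gbarA: assumes "g a \<le> ereal t" shows "norm1 a \<le> gbarA g t"
proof -
  obtain R where R: "\<forall>a. g a \<le> ereal t \<longrightarrow> norm a \<le> R" using sublevel_bounded by blast
  define S where "S = {norm1 a | a. g a \<le> ereal t}"
  have "bdd_above S"
  proof
    fix y assume "y \<in> S"
    then obtain b where "y = norm1 b" "g b \<le> ereal t" unfolding S_def by blast
    moreover have "norm b \<le> R" using R \<open>g b \<le> ereal t\<close> by blast
    ultimately show "y \<le> real CARD('d) * R"
      using norm1_le_card_norm[of b] by (meson mult_left_mono of_nat_0_le_iff order_trans)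
  qed
  moreover have "norm1 a \<in> S" unfolding S_def using assms by blast
  ultimately have "norm1 a \<le> Sup S" by (intro cSup_upper)
  moreover have "S \<noteq> {}" using \<open>norm1 a \<in> S\<close> by blast
  ultimately show ?thesis unfolding gbarA_def S_def[symmetric] by (simp add: Let_def)
qed

lemma gbarA_nonneg: "0 \<le> gbarA g t"
proof (cases "{norm1 a | a. g a \<le> ereal t} = {}")
  case True then show ?thesis by (simp add: gbarA_def)
next
  case False
  then obtain a where "g a \<le> ereal t" by blast
  then show ?thesis using norm1_le_gbarA[of a t] norm1_nonneg[of a] by simp
qed

lemma mono_gbarA: "mono (gbarA g)"
proof (rule monoI)
  fix s t :: real assume st: "s \<le> t"
  show "gbarA g s \<le> gbarA g t"
  proof (cases "{norm1 a | a. g a \<le> ereal s} = {}")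
    case True then show ?thesis using gbarA_nonneg[of t] by (simp add: gbarA_def)
  next
    case False
    have "Sup {norm1 a | a. g a \<le> ereal s} \<le> gbarA g t"
    proof (rule cSup_least[OF False])
      fix y assume "y \<in> {norm1 a | a. g a \<le> ereal s}"
      then obtain a where "y = norm1 a" "g a \<le> ereal s" by blast
      then show "y \<le> gbarA g t" using norm1_le_gbarA[of a t] st order_trans by force
    qed
    moreover have "gbarA g s = Sup {norm1 a | a. g a \<le> ereal s}"
      using False unfolding gbarA_def Let_def by (simp only: if_False)
    ultimately show ?thesis by simp
  qed
qed

text \<open>A minimizing sequence stays in a sublevel set of \<open>g\<close>, hence in a compact ball; lower
  semicontinuity passes to the limit of a convergent subsequence.\<close>
lemma exists_minimizer:
  obtains a \<gamma> where "g a = ereal \<gamma>" "0 \<le> \<gamma>" "(norm (x - D *v a))\<^sup>2 / 2 + \<gamma> \<le> fx g x D"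
proof -
  define q where "q a = (norm (x - D *v a))\<^sup>2 / 2" for a
  have "\<exists>a \<gamma>. g a = ereal \<gamma> \<and> 0 \<le> \<gamma> \<and> q a + \<gamma> < fx g x D + 1 / real (Suc k)" for k
    unfolding q_def by (rule exists_approx_minimizer[of "1 / real (Suc k)"]) auto
  then obtain \<alpha> \<Gamma> where al: "\<And>k. g (\<alpha> k) = ereal (\<Gamma> k)"
    "\<And>k. q (\<alpha> k) + \<Gamma> k < fx g x D + 1 / real (Suc k)"
    by metis
  obtain R where R: "\<forall>a. g a \<le> ereal (fx g x D + 1) \<longrightarrow> norm a \<le> R"
    using sublevel_bounded by blast
  have "\<alpha> k \<in> cball 0 R" for k
  proof -
    have "0 \<le> q (\<alpha> k)" "1 / real (Suc k) \<le> 1" unfolding q_def by simp_all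
    then have "\<Gamma> k \<le> fx g x D + 1" using al(2)[of k] by linarith
    then show ?thesis using R al(1)[of k] by simp
  qed
  then obtain l r where lr: "strict_mono r" "(\<alpha> \<circ> r) \<longlonglongrightarrow> l"
    using seq_compactE[OF compact_imp_seq_compact[OF compact_cball], of \<alpha> 0 R] by blast
  define h where "h j = fx g x D + 1 / real (Suc (r j)) - q (\<alpha> (r j))" for j
  have "(\<lambda>j. D *v (\<alpha> (r j))) \<longlonglongrightarrow> D *v l"
    using isCont_tendsto_compose[OF matrix_vector_mult_linear_continuous_at lr(2)[unfolded comp_def]] .
  then have "(\<lambda>j. q (\<alpha> (r j))) \<longlonglongrightarrow> q l"
    unfolding q_def by (intro tendsto_intros) auto
  moreover have "(\<lambda>j. 1 / real (Suc (r j))) \<longlonglongrightarrow> 0"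
    using LIMSEQ_subseq_LIMSEQ[OF LIMSEQ_Suc[OF lim_const_over_n[of 1]] lr(1)] by (simp add: comp_def)
  ultimately have hlim: "h \<longlonglongrightarrow> fx g x D + 0 - q l"
    unfolding h_def by (intro tendsto_intros)
  have "g l \<le> liminf (\<lambda>k. g ((\<alpha> \<circ> r) k))"
    using g_lsc lr(2) unfolding lsc_fun_def by blast
  also have "\<dots> \<le> liminf (\<lambda>j. ereal (h j))"
  proof (intro Liminf_mono always_eventually allI)
    fix j show "g ((\<alpha> \<circ> r) j) \<le> ereal (h j)"
      using al(1)[of "r j"] al(2)[of "r j"] unfolding h_def by simp
  qed
  also have "\<dots> = ereal (fx g x D - q l)"
    using lim_imp_Liminf[OF trivial_limit_sequentially tendsto_ereal[OF hlim]] by simp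
  finally have gl: "g l \<le> ereal (fx g x D - q l)" .
  moreover have "g l \<noteq> -\<infinity>" using g_nonneg[of l] by auto
  ultimately obtain \<gamma> where \<gamma>: "g l = ereal \<gamma>" by (cases "g l") auto
  show ?thesis
    using that[OF \<gamma>] g_nonneg[of l] gl unfolding \<gamma> q_def by simp
qed

lemma fx_lipschitz_dictionary:
  "\<bar>fx g x D1 - fx g x D2\<bar> \<le> norm x * gbarA g ((norm x)\<^sup>2 / 2) * norm12 (D1 - D2)"
proof -
  define G where "G = gbarA g ((norm x)\<^sup>2 / 2)"
  have quadratic: "fx g x E1 \<le> fx g x E2 + norm x * G * norm12 (E1 - E2) + G\<^sup>2 / 2 * (norm12 (E1 - E2))\<^sup>2"
    for E1 E2
  proof -
    obtain a \<gamma> where a: "g a = ereal \<gamma>" "0 \<le> \<gamma>" "(norm (x - E2 *v a))\<^sup>2 / 2 + \<gamma> \<le> fx g x E2"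
      by (rule exists_minimizer)
    have "\<gamma> \<le> (norm x)\<^sup>2 / 2"
      using a(3) fx_le_half_sq_norm[of x E2] zero_le_power2[of "norm (x - E2 *v a)"] by linarith
    then have "norm1 a \<le> G" unfolding G_def using a(1) by (intro norm1_le_gbarA) simp
    moreover have "norm (x - E2 *v a) \<le> norm x"
      using approx_minimizer_residual_le[OF a(1,2), of x E2 0] a(3) by simp
    ultimately show ?thesis using fx_dictionary_perturb_le[OF a(1), of x E2 0] a(3) by simp
  qed
  have "fx g x E1 \<le> fx g x E2 + norm x * G * norm12 (E1 - E2)" for E1 E2
    by (rule convex_quadratic_bound_imp_lipschitz[of UNIV, OF convex_UNIV _ quadratic]) auto
  from this[of D1 D2] this[of D2 D1] show ?thesis
    unfolding G_def by (simp add: abs_le_iff norm12_minus_commute[of D2 D1])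
qed

end

lemma assmA_imp_coercive_penalty: "assmA g \<Longrightarrow> coercive_penalty g"
  unfolding assmA_def coercive_penalty_def coercive_penalty_axioms_def nonneg_penalty_def by auto

lemma borel_measurable_gbarB: "gbarB \<kappa> \<in> borel_measurable borel"
  unfolding gbarB_def by measurable

lemma gbarB_nonneg: "0 < \<kappa> \<Longrightarrow> 0 \<le> t \<Longrightarrow> 0 \<le> gbarB \<kappa> t"
  unfolding gbarB_def by simp

locale indicator_penalty =
  fixes g :: "real^'d \<Rightarrow> ereal" and DD :: "(real^'d^'m) set" and \<kappa> :: real
  assumes assmB: "assmB123 g DD \<kappa>"
begin

lemma kappa_pos: "0 < \<kappa>"
  using assmB unfolding assmB123_def by auto

sublocale nonneg_penalty g
  using assmB unfolding assmB123_def by unfold_locales auto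

lemma lower_frame_bound:
  assumes "g a \<noteq> \<infinity>" "D \<in> DD" shows "\<kappa> * (norm1 a)\<^sup>2 \<le> (norm (D *v a))\<^sup>2"
  using assmB assms unfolding assmB123_def by (metis ereal_infty_less(1) less_le_not_le order_refl)

lemma gbarB_half_sq_norm: "gbarB \<kappa> ((norm x)\<^sup>2 / 2) = 2 * norm x / sqrt \<kappa>"
  unfolding gbarB_def by (simp add: real_sqrt_divide)

text \<open>B2 turns the bound \<open>\<parallel>D a\<parallel> \<le> \<parallel>x\<parallel> + r\<close> into a bound on \<open>\<parallel>a\<parallel>\<^sub>1\<close>.\<close>
lemma norm1_le_of_residual_le:
  assumes "g a \<noteq> \<infinity>" "D \<in> DD" "norm (x - D *v a) \<le> r"
  shows "norm1 a \<le> (norm x + r) / sqrt \<kappa>"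
proof -
  have "norm (D *v a) \<le> norm x + r"
    using norm_triangle_ineq4[of x "x - D *v a"] assms(3) by simp
  then have "\<kappa> * (norm1 a)\<^sup>2 \<le> (norm x + r)\<^sup>2"
    using lower_frame_bound[OF assms(1,2)] by (meson norm_ge_zero order_trans power_mono)
  then have "sqrt (\<kappa> * (norm1 a)\<^sup>2) \<le> norm x + r"
    using assms(3) by (simp add: real_sqrt_le_iff real_le_lsqrt add_nonneg_nonneg order_trans[OF norm_ge_zero])
  then have "sqrt \<kappa> * norm1 a \<le> norm x + r"
    by (simp add: real_sqrt_mult norm1_nonneg)
  then show ?thesis using kappa_pos by (simp add: field_simps)
qed

lemma fx_dictionary_quadratic_bound:
  assumes "D1 \<in> DD" "D2 \<in> DD"
  shows "fx g x D1 \<le> fx g x D2 + norm x * gbarB \<kappa> ((norm x)\<^sup>2 / 2) * norm12 (D1 - D2)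
    + (gbarB \<kappa> ((norm x)\<^sup>2 / 2))\<^sup>2 / 2 * (norm12 (D1 - D2))\<^sup>2"
proof -
  define R where "R \<epsilon> = sqrt ((norm x)\<^sup>2 + 2 * \<epsilon>)" for \<epsilon>
  define k where "k \<epsilon> = fx g x D2 + \<epsilon> + R \<epsilon> * ((norm x + R \<epsilon>) / sqrt \<kappa>) * norm12 (D1 - D2)
      + ((norm x + R \<epsilon>) / sqrt \<kappa>)\<^sup>2 / 2 * (norm12 (D1 - D2))\<^sup>2" for \<epsilon>
  have "fx g x D1 \<le> k \<epsilon>" if pos: "0 < \<epsilon>" for \<epsilon>
  proof -
    obtain a \<gamma> where a: "g a = ereal \<gamma>" "0 \<le> \<gamma>" "(norm (x - D2 *v a))\<^sup>2 / 2 + \<gamma> < fx g x D2 + \<epsilon>"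
      using exists_approx_minimizer[OF pos] by blast
    have r: "norm (x - D2 *v a) \<le> R \<epsilon>"
      unfolding R_def using approx_minimizer_residual_le[OF a(1,2) less_imp_le[OF a(3)]] .
    have "norm1 a \<le> (norm x + R \<epsilon>) / sqrt \<kappa>"
      using norm1_le_of_residual_le[OF _ assms(2) r] a(1) by simp
    with fx_dictionary_perturb_le[OF a(1) less_imp_le[OF a(3)] r] show ?thesis
      unfolding k_def by blast
  qed
  moreover have "(k \<longlongrightarrow> k 0) (at_right 0)"
    unfolding k_def R_def by (intro tendsto_intros) (use kappa_pos in auto)
  ultimately have "fx g x D1 \<le> k 0" by (rule le_tendsto_at_right_0)
  then show ?thesis unfolding k_def R_def gbarB_half_sq_norm by simp
qed

lemma fx_lipschitz_dictionary_convex: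
  assumes "convex DD" "D1 \<in> DD" "D2 \<in> DD"
  shows "\<bar>fx g x D1 - fx g x D2\<bar> \<le> norm x * gbarB \<kappa> ((norm x)\<^sup>2 / 2) * norm12 (D1 - D2)"
proof -
  have "fx g x E1 \<le> fx g x E2 + norm x * gbarB \<kappa> ((norm x)\<^sup>2 / 2) * norm12 (E1 - E2)"
    if "E1 \<in> DD" "E2 \<in> DD" for E1 E2
    by (rule convex_quadratic_bound_imp_lipschitz[OF assms(1) _ fx_dictionary_quadratic_bound that])
      simp
  from this[of D1 D2] this[of D2 D1] assms show ?thesis
    by (simp add: abs_le_iff norm12_minus_commute[of D2 D1])
qed

lemma fx_lipschitz_dictionary:
  assumes "D1 \<in> DD" "D2 \<in> DD"
  shows "\<bar>fx g x D1 - fx g x D2\<bar> \<le> norm x * gbarB \<kappa> ((norm x)\<^sup>2 / 2) *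
     (norm12 (D1 - D2) + (norm12 (D1 - D2))\<^sup>2 / sqrt \<kappa>)"
proof -
  have "(gbarB \<kappa> ((norm x)\<^sup>2 / 2))\<^sup>2 / 2 = norm x * gbarB \<kappa> ((norm x)\<^sup>2 / 2) * (1 / sqrt \<kappa>)"
    unfolding gbarB_half_sq_norm using kappa_pos by (simp add: power_divide power2_eq_square field_simps)
  with fx_dictionary_quadratic_bound[OF assms, of x] fx_dictionary_quadratic_bound[OF assms(2,1), of x]
  show ?thesis by (simp add: abs_le_iff norm12_minus_commute[of D2 D1] algebra_simps)
qed

end

lemma two_le_ln_if_div_ln_ge_8:
  assumes "8 \<le> real n / ln (real n)"
  shows "2 \<le> n" "2 \<le> ln (real n)"
proof -
  have "n \<notin> {0, 1}"
  proof
    assume "n \<in> {0, 1}"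
    with assms show False by auto
  qed
  then show n2: "2 \<le> n" by auto
  have "0 < ln (real n)" using n2 by simp
  then have nb: "8 * ln (real n) \<le> real n" using assms by (simp add: field_simps)
  show "2 \<le> ln (real n)"
  proof (cases "8 \<le> n")
    case True
    have "ln (8::real) = 3 * ln 2" using ln_realpow[of 2 3] by simp
    then have "2 \<le> ln (8::real)" using ln2_ge_two_thirds by simp
    also have "\<dots> \<le> ln (real n)" using True by simp
    finally show ?thesis .
  next
    case False
    then have n7: "real n \<le> 7" by simp
    have "ln (1 / real n) \<le> 1 / real n - 1" using n2 by (intro ln_le_minus_one) simp
    then have l1: "1 - 1 / real n \<le> ln (real n)" using n2 by (simp add: ln_div)
    show ?thesis
    proof (cases "4 \<le> n")
      case True
      have "ln (4::real) = 2 * ln 2" using ln_realpow[of 2 2] by simp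
      then have "1 \<le> ln (4::real)" using ln2_ge_two_thirds by simp
      also have "\<dots> \<le> ln (real n)" using True by simp
      finally show ?thesis using nb n7 by simp
    next
      case False
      then have "real n \<le> 3" by simp
      moreover have "1 / real n \<le> 1 / 2" using n2 by (simp add: field_simps)
      ultimately show ?thesis using l1 nb by simp
    qed
  qed
qed

lemma covering_radius_bounds:
  fixes n :: nat
  assumes n1: "8 \<le> real n / ln (real n)" and n3: "D0 * (c / (2 * L))\<^sup>2 * \<beta> \<le> real n / ln (real n)"
    and c: "0 < c" and L: "0 < L" and \<beta>: "1 \<le> \<beta>" and D0: "1 \<le> D0"
    and \<epsilon>: "\<epsilon> = c * sqrt (\<beta> * ln (real n) / real n) / (2 * L)"
  shows "0 < \<epsilon>" "D0 * \<epsilon>\<^sup>2 \<le> 1" "\<epsilon> \<le> 1"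
proof -
  have lnn: "2 \<le> ln (real n)" and n2: "2 \<le> n" using two_le_ln_if_div_ln_ge_8[OF n1] by auto
  have pos: "0 < \<beta> * ln (real n) / real n" using \<beta> lnn n2 by simp
  then show ep: "0 < \<epsilon>" unfolding \<epsilon> using c L by simp
  have "\<epsilon>\<^sup>2 = (c / (2 * L))\<^sup>2 * (\<beta> * ln (real n) / real n)"
    unfolding \<epsilon> using pos by (simp add: power_divide power_mult_distrib)
  then have "D0 * \<epsilon>\<^sup>2 = D0 * (c / (2 * L))\<^sup>2 * \<beta> * (ln (real n) / real n)" by simp
  also have "\<dots> \<le> real n / ln (real n) * (ln (real n) / real n)"
    using n3 lnn n2 by (intro mult_right_mono) auto
  also have "\<dots> = 1" using lnn n2 by simp
  finally show D: "D0 * \<epsilon>\<^sup>2 \<le> 1" .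
  have "\<epsilon>\<^sup>2 \<le> 1" using D D0 order_trans[OF mult_right_mono[OF D0 zero_le_power2]] by simp
  then show "\<epsilon> \<le> 1" using ep by (simp add: power_le_one_iff abs_le_iff)
qed

text \<open>With \<open>\<epsilon> = c s / (2L)\<close> one has \<open>ln (C/\<epsilon>) = ln (2LC/c) + (ln n - ln (\<beta> ln n)) / 2\<close>.\<close>
lemma log_covering_number_le:
  fixes n :: nat
  assumes n1: "8 \<le> real n / ln (real n)"
    and c: "0 < c" and L: "0 < L" and C: "1 \<le> C" and h: "1 \<le> h"
    and \<beta>: "\<beta> = h * max (ln (2 * L * C / c)) 1"
    and \<epsilon>: "\<epsilon> = c * sqrt (\<beta> * ln (real n) / real n) / (2 * L)"
  shows "h * ln (C / \<epsilon>) \<le> \<beta> * ln (real n)"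
proof -
  have lnn: "2 \<le> ln (real n)" and n2: "2 \<le> n" using two_le_ln_if_div_ln_ge_8[OF n1] by auto
  have hb: "h \<le> \<beta>" unfolding \<beta> using h mult_left_mono[of 1 "max (ln (2 * L * C / c)) 1" h] by simp
  have bl: "1 \<le> \<beta> * ln (real n)" using mult_mono[of 1 \<beta> 1 "ln (real n)"] h hb lnn by simp
  define lb where "lb = ln (\<beta> * ln (real n))"
  have lb0: "0 \<le> lb" unfolding lb_def using bl by simp
  define S where "S = sqrt (\<beta> * ln (real n) / real n)"
  have S: "0 < S" unfolding S_def using bl n2 by simp
  have "ln \<epsilon> = ln c + ln S - ln (2 * L)"
    unfolding \<epsilon> S_def[symmetric] using c L S by (simp add: ln_mult ln_div)
  also have "ln S = (lb - ln (real n)) / 2"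
    unfolding lb_def S_def using bl n2 h hb by (simp add: ln_sqrt ln_div del: ln_mult_pos)
  finally have "ln \<epsilon> = ln c - ln (2 * L) + (lb - ln (real n)) / 2" by simp
  moreover have "ln (2 * L * C / c) = ln (2 * L) + ln C - ln c" using c L C by (simp add: ln_div ln_mult)
  moreover have "ln (C / \<epsilon>) = ln C - ln \<epsilon>"
    using C S c L by (simp add: ln_div ln_mult \<epsilon> S_def[symmetric])
  ultimately have "ln (C / \<epsilon>) = ln (2 * L * C / c) + (ln (real n) - lb) / 2"
    by (simp add: field_simps)
  then have "h * ln (C / \<epsilon>) = h * ln (2 * L * C / c) + h / 2 * ln (real n) - h / 2 * lb"
    by (simp add: ring_distribs diff_divide_distrib)
  also have "\<dots> \<le> \<beta> + \<beta> / 2 * ln (real n)"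
  proof -
    have "h * ln (2 * L * C / c) \<le> \<beta>" unfolding \<beta> using h by (intro mult_left_mono) auto
    moreover have "h * ln (real n) \<le> \<beta> * ln (real n)" using hb lnn by (intro mult_right_mono) auto
    moreover have "0 \<le> h * lb" using h lb0 by simp
    ultimately show ?thesis by linarith
  qed
  also have "\<dots> \<le> \<beta> * ln (real n)"
  proof -
    have "\<beta> * 2 \<le> \<beta> * ln (real n)" using lnn hb h by (intro mult_left_mono) auto
    then show ?thesis by simp
  qed
  finally show ?thesis .
qed

lemma sqrt_deviation_level_le:
  fixes n :: nat
  assumes "0 < real n" "0 \<le> x" "0 \<le> \<beta>" "H \<le> \<beta> * ln (real n)" "0 \<le> \<beta> * ln (real n)"
  shows "sqrt ((x + H) / real n) \<le> sqrt ((\<beta> + x) / real n) + sqrt (\<beta> * ln (real n) / real n)"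
proof -
  have "sqrt ((x + H) / real n) \<le> sqrt ((\<beta> + x) / real n + \<beta> * ln (real n) / real n)"
    using assms by (intro real_sqrt_le_mono) (simp add: add_divide_distrib[symmetric] divide_right_mono)
  also have "\<dots> \<le> sqrt ((\<beta> + x) / real n) + sqrt (\<beta> * ln (real n) / real n)"
    using assms by (intro sqrt_add_le_add_sqrt) auto
  finally show ?thesis .
qed

lemma ereal_sqrt_deviation_level_le:
  fixes n :: nat and T :: ereal
  assumes "0 < T" "0 < real n" "0 \<le> y" "T = \<infinity> \<or> y \<le> real n * (real_of_ereal T)\<^sup>2"
  shows "ereal (sqrt (y / real n)) \<le> T"
proof (cases T)
  case (real t)
  then have "y / real n \<le> t\<^sup>2" using assms by (simp add: field_simps)
  then have "sqrt (y / real n) \<le> t" using assms real by (simp add: real_sqrt_le_iff real_le_lsqrt)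
  then show ?thesis using real by simp
qed (use assms in auto)

text \<open>The quadratic part \<open>2 L K\<^sub>2 \<epsilon>\<^sup>2 = c s K\<^sub>2 \<epsilon>\<close> of the net error costs one extra \<open>c s\<close> because
  \<open>K\<^sub>2\<^sup>2 \<epsilon>\<^sup>2 \<le> D\<^sub>0 \<epsilon>\<^sup>2 \<le> 1\<close>.\<close>
lemma net_modulus_le:
  fixes L \<epsilon> c s K2 D0 a :: real
  assumes "2 * L * \<epsilon> = c * s" "0 \<le> c * s" "0 < \<epsilon>" "0 \<le> K2" "K2\<^sup>2 \<le> D0" "D0 * \<epsilon>\<^sup>2 \<le> 1"
    and "2 \<le> a" "K2 = 0 \<or> 3 \<le> a"
  shows "2 * L * (\<epsilon> + K2 * \<epsilon>\<^sup>2) \<le> (a - 1) * (c * s)"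
proof -
  have "(K2 * \<epsilon>)\<^sup>2 \<le> D0 * \<epsilon>\<^sup>2"
    using assms(5) by (simp add: power_mult_distrib mult_right_mono)
  then have "(K2 * \<epsilon>)\<^sup>2 \<le> 1\<^sup>2" using assms(6) by simp
  then have "K2 * \<epsilon> \<le> 1" by (rule power2_le_imp_le) simp
  then have "c * s * (K2 * \<epsilon>) \<le> (a - 2) * (c * s)"
    using mult_left_mono[of "K2 * \<epsilon>" 1 "c * s"] mult_right_mono[of 1 "a - 2" "c * s"] assms(2,7,8)
    by (cases "K2 = 0") auto
  moreover have "2 * L * (\<epsilon> + K2 * \<epsilon>\<^sup>2) = c * s + c * s * (K2 * \<epsilon>)"
    using assms(1) by (simp add: power2_eq_square algebra_simps)
  ultimately show ?thesis by (simp add: algebra_simps)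
qed

lemma measurable_sets_eq_borel_cong: "sets P = sets borel \<Longrightarrow> measurable P N = measurable borel N"
  by (rule measurable_cong_sets) auto

lemma covering_number_le_imp_cover:
  assumes "covering_number DD eps \<le> ereal B"
  obtains Q where "Q \<subseteq> DD" "finite Q" "\<forall>D\<in>DD. \<exists>q\<in>Q. norm12 (D - q) \<le> eps" "real (card Q) \<le> B"
proof -
  define good where "good Q \<longleftrightarrow> Q \<subseteq> DD \<and> finite Q \<and> (\<forall>D\<in>DD. \<exists>q\<in>Q. norm12 (D - q) \<le> eps)" for Q
  have cn: "covering_number DD eps = Inf {ereal (card Q) | Q. good Q}"
    unfolding covering_number_def good_def ..
  have "\<exists>Q. good Q"
  proof (rule ccontr)
    assume "\<nexists>Q. good Q"
    then have "covering_number DD eps = \<infinity>" unfolding cn by (simp add: top_ereal_def)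
    then show False using assms by simp
  qed
  then obtain Q where Q: "good Q" "\<And>Q'. good Q' \<Longrightarrow> card Q \<le> card Q'"
    using ex_has_least_nat[of good _ card] by blast
  have "ereal (card Q) \<le> covering_number DD eps"
    unfolding cn by (rule Inf_greatest) (use Q(2) in auto)
  then have "real (card Q) \<le> B" using assms by (metis ereal_less_eq(3) order_trans)
  then show ?thesis using Q(1) that unfolding good_def by blast
qed

text \<open>The Lipschitz constant of \<open>D \<mapsto> f\<^sub>x(D)\<close>; \<open>LX\<close> and \<open>LP\<close> are its empirical and true means.\<close>
definition lip_weight :: "(real \<Rightarrow> real) \<Rightarrow> real^'m \<Rightarrow> real" where
  "lip_weight gbar y = norm y * gbar ((norm y)\<^sup>2 / 2)"

lemma lip_weight_nonneg: "(\<And>t. 0 \<le> t \<Longrightarrow> 0 \<le> gbar t) \<Longrightarrow> 0 \<le> lip_weight gbar y"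
  unfolding lip_weight_def by simp

lemma borel_measurable_lip_weight:
  assumes "gbar \<in> borel_measurable borel" shows "lip_weight gbar \<in> borel_measurable borel"
  unfolding lip_weight_def
  by (intro borel_measurable_times borel_measurable_norm measurable_compose[OF _ assms]) measurable

lemma integrable_lip_weight:
  fixes P :: "(real^'m) measure"
  assumes P: "sets P = sets borel" and gbar: "gbar \<in> borel_measurable borel" "\<And>t. 0 \<le> t \<Longrightarrow> 0 \<le> gbar t"
    and L: "LP gbar P < ennreal L"
  shows "integrable P (lip_weight gbar)" "integral\<^sup>L P (lip_weight gbar) \<le> L"
proof -
  have meas: "lip_weight gbar \<in> borel_measurable P"
    unfolding measurable_sets_eq_borel_cong[OF P] by (rule borel_measurable_lip_weight[OF gbar(1)])
  have LP: "LP gbar P = (\<integral>\<^sup>+ y. ennreal (lip_weight gbar y) \<partial>P)"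
    unfolding LP_def lip_weight_def ..
  have nn: "\<And>y. 0 \<le> lip_weight gbar (y :: real^'m)" by (rule lip_weight_nonneg[of gbar, OF gbar(2)])
  have fin: "LP gbar P \<noteq> \<top>" using L top.not_eq_extremum by fastforce
  show int: "integrable P (lip_weight gbar)"
  proof (rule integrableI_nn_integral_finite[OF meas])
    show "AE y in P. 0 \<le> lip_weight gbar y" using nn by simp
    show "(\<integral>\<^sup>+ y. ennreal (lip_weight gbar y) \<partial>P) = ennreal (enn2real (LP gbar P))"
      unfolding LP[symmetric] using fin by (simp add: ennreal_enn2real_if)
  qed
  have "ennreal (integral\<^sup>L P (lip_weight gbar)) = LP gbar P"
    unfolding LP by (rule nn_integral_eq_integral[OF int, symmetric]) (simp add: nn)
  then have "ennreal (integral\<^sup>L P (lip_weight gbar)) < ennreal L" using L by simp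
  moreover have "0 \<le> integral\<^sup>L P (lip_weight gbar)" using nn by simp
  ultimately show "integral\<^sup>L P (lip_weight gbar) \<le> L" by (simp add: ennreal_less_iff)
qed

lemma integrable_of_abs_diff_le:
  fixes f1 f2 \<phi> :: "'a \<Rightarrow> real"
  assumes "integrable M f2" "f1 \<in> borel_measurable M" "integrable M \<phi>"
    and "\<And>y. \<bar>f1 y - f2 y\<bar> \<le> \<phi> y * w"
  shows "integrable M f1"
proof -
  have "integrable M (\<lambda>y. f1 y - f2 y)"
  proof (rule Bochner_Integration.integrable_bound)
    show "integrable M (\<lambda>y. \<phi> y * w)" using assms(3) by simp
    show "(\<lambda>y. f1 y - f2 y) \<in> borel_measurable M" using assms(1,2) by measurable
    show "AE y in M. norm (f1 y - f2 y) \<le> norm (\<phi> y * w)"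
      using assms(4) by (auto intro: order_trans[OF _ abs_ge_self])
  qed
  from Bochner_Integration.integrable_add[OF assms(1) this] show ?thesis by simp
qed

text \<open>Non-integrability transfers between \<open>f\<^sub>1\<close> and \<open>f\<^sub>2\<close> as well, so the junk value \<open>0\<close> of the
  Bochner integral is taken on both sides at once.\<close>
lemma abs_integral_diff_le:
  fixes f1 f2 \<phi> :: "'a \<Rightarrow> real"
  assumes m: "f1 \<in> borel_measurable M" "f2 \<in> borel_measurable M" and \<phi>: "integrable M \<phi>"
    and nn: "\<And>y. 0 \<le> \<phi> y" "0 \<le> w"
    and bound: "\<And>y. \<bar>f1 y - f2 y\<bar> \<le> \<phi> y * w"
  shows "\<bar>integral\<^sup>L M f1 - integral\<^sup>L M f2\<bar> \<le> integral\<^sup>L M \<phi> * w"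
proof -
  have bound': "\<And>y. \<bar>f2 y - f1 y\<bar> \<le> \<phi> y * w" using bound by (simp add: abs_minus_commute)
  have iff: "integrable M f1 \<longleftrightarrow> integrable M f2"
    using integrable_of_abs_diff_le[OF _ m(1) \<phi> bound] integrable_of_abs_diff_le[OF _ m(2) \<phi> bound'] by blast
  show ?thesis
  proof (cases "integrable M f2")
    case True
    then have i1: "integrable M f1" using iff by simp
    have iw: "integrable M (\<lambda>y. \<phi> y * w)" using \<phi> by simp
    have "f1 y \<le> f2 y + \<phi> y * w" "f2 y \<le> f1 y + \<phi> y * w" for y
      using bound[of y] by (simp_all add: abs_le_iff)
    then have "integral\<^sup>L M f1 \<le> integral\<^sup>L M (\<lambda>y. f2 y + \<phi> y * w)"
        "integral\<^sup>L M f2 \<le> integral\<^sup>L M (\<lambda>y. f1 y + \<phi> y * w)"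
      by (intro integral_mono i1 True Bochner_Integration.integrable_add iw; simp)+
    then show ?thesis using True i1 iw by (simp add: abs_le_iff)
  next
    case False
    then show ?thesis using iff nn by (simp add: not_integrable_integral_eq)
  qed
qed

lemma abs_FX_diff_le:
  assumes "\<And>i. i < n \<Longrightarrow> \<bar>fx g (X i) D - fx g (X i) q\<bar> \<le> lip_weight gbar (X i) * u"
  shows "\<bar>FX g n X D - FX g n X q\<bar> \<le> LX gbar n X * u"
proof -
  have "\<bar>FX g n X D - FX g n X q\<bar> = (1 / real n) * \<bar>\<Sum>i<n. fx g (X i) D - fx g (X i) q\<bar>"
    unfolding FX_def right_diff_distrib[symmetric] sum_subtractf[symmetric] abs_mult by simp
  also have "\<dots> \<le> (1 / real n) * (\<Sum>i<n. lip_weight gbar (X i) * u)"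
    by (intro mult_left_mono order_trans[OF sum_abs] sum_mono assms) auto
  also have "\<dots> = LX gbar n X * u"
    unfolding LX_def lip_weight_def by (simp add: sum_distrib_right)
  finally show ?thesis .
qed

context nonneg_penalty
begin

lemma measure_net_deviation_event_le:
  fixes P :: "(real^'m) measure" and Q :: "(real^'d^'m) set" and n :: nat and L c \<tau> :: real
  assumes P: "prob_space P" "sets P = sets borel" and gbar: "gbar \<in> borel_measurable borel"
    and Q: "finite Q" "Q \<subseteq> DD"
    and C2: "condC2 g DD P c T" and \<tau>: "0 \<le> \<tau>" "ereal \<tau> \<le> T"
  defines "E \<equiv> {X \<in> space (sample P n).
             L < LX gbar n X \<or> (\<exists>q\<in>Q. c * \<tau> < \<bar>FX g n X q - Ef g P q\<bar>)}"
  shows "E \<in> sets (sample P n)"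
    and "measure (sample P n) E \<le> Lambda gbar P n L + real (card Q) * (2 * exp (- real n * \<tau>\<^sup>2))"
proof -
  let ?M = "sample P n"
  interpret M: prob_space ?M
    unfolding sample_def by (rule prob_space_PiM) (use P in auto)
  have coord: "(\<lambda>X. f (X i)) \<in> borel_measurable ?M"
    if "f \<in> borel_measurable borel" "i \<in> {..<n}" for f :: "real^'m \<Rightarrow> real" and i
  proof -
    have "f \<in> borel_measurable P" unfolding measurable_sets_eq_borel_cong[OF P(2)] by (rule that(1))
    then show ?thesis
      unfolding sample_def by (rule measurable_compose[OF measurable_component_singleton[OF that(2)]])
  qed
  have "(\<lambda>X. FX g n X q) \<in> borel_measurable ?M" for q
    unfolding FX_def by (intro borel_measurable_times borel_measurable_const borel_measurable_sum
        coord borel_measurable_fx)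
  then have dev: "{X \<in> space ?M. c * \<tau> < \<bar>FX g n X q - Ef g P q\<bar>} \<in> sets ?M" for q
    by measurable
  have "(\<lambda>X. LX gbar n X) \<in> borel_measurable ?M"
    unfolding LX_def lip_weight_def[symmetric]
    by (intro borel_measurable_times borel_measurable_const borel_measurable_sum coord
        borel_measurable_lip_weight gbar)
  then have LX: "{X \<in> space ?M. L < LX gbar n X} \<in> sets ?M" by measurable
  define B0 where "B0 = {X \<in> space ?M. L < LX gbar n X}"
  define B where "B q = {X \<in> space ?M. c * \<tau> < \<bar>FX g n X q - Ef g P q\<bar>}" for q
  have E_eq: "E = B0 \<union> (\<Union>q\<in>Q. B q)"
    unfolding E_def B0_def B_def by auto
  show "E \<in> sets ?M" unfolding E_eq B0_def B_def using LX dev Q(1) by auto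
  have "measure ?M E \<le> measure ?M B0 + measure ?M (\<Union>q\<in>Q. B q)"
    unfolding E_eq by (rule measure_Un_le) (use LX dev Q(1) in \<open>auto simp: B0_def B_def\<close>)
  also have "measure ?M (\<Union>q\<in>Q. B q) \<le> (\<Sum>q\<in>Q. measure ?M (B q))"
    by (rule measure_UNION_le[OF Q(1)]) (use dev in \<open>auto simp: B_def\<close>)
  also have "measure ?M B0 + (\<Sum>q\<in>Q. measure ?M (B q))
      \<le> Lambda gbar P n L + (\<Sum>q\<in>Q. 2 * exp (- real n * \<tau>\<^sup>2))"
    using C2 Q(2) \<tau> unfolding Lambda_def condC2_def B0_def B_def by (intro add_mono sum_mono) auto
  finally show "measure ?M E \<le> Lambda gbar P n L + real (card Q) * (2 * exp (- real n * \<tau>\<^sup>2))"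
    by simp
qed

lemma deviation_le_via_net_point:
  fixes P :: "(real^'m) measure" and D q :: "real^'d^'m" and X :: "nat \<Rightarrow> real^'m"
  assumes P: "sets P = sets borel"
    and w: "integrable P (lip_weight gbar)" "integral\<^sup>L P (lip_weight gbar) \<le> L"
      "\<And>y. 0 \<le> lip_weight gbar (y :: real^'m)"
    and lip: "\<And>y. \<bar>fx g y D - fx g y q\<bar> \<le> lip_weight gbar y * (norm12 (D - q) + K2 * (norm12 (D - q))\<^sup>2)"
    and K2: "0 \<le> K2" and near: "norm12 (D - q) \<le> \<epsilon>"
    and LX: "LX gbar n X \<le> L" and dev: "\<bar>FX g n X q - Ef g P q\<bar> \<le> t"
  shows "\<bar>FX g n X D - Ef g P D\<bar> \<le> 2 * L * (\<epsilon> + K2 * \<epsilon>\<^sup>2) + t"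
proof -
  define u where "u = \<epsilon> + K2 * \<epsilon>\<^sup>2"
  have "0 \<le> norm12 (D - q)" by (rule norm12_nonneg)
  then have "norm12 (D - q) + K2 * (norm12 (D - q))\<^sup>2 \<le> u" "0 \<le> u"
    unfolding u_def using near K2 by (auto intro!: add_mono mult_left_mono power_mono)
  then have lip_u: "\<bar>fx g y D - fx g y q\<bar> \<le> lip_weight gbar y * u" for y
    using lip[of y] w(3)[of y] by (meson mult_left_mono order_trans)
  have "\<bar>FX g n X D - FX g n X q\<bar> \<le> LX gbar n X * u" by (rule abs_FX_diff_le[OF lip_u])
  also have "\<dots> \<le> L * u" using LX \<open>0 \<le> u\<close> by (rule mult_right_mono)
  finally have sample: "\<bar>FX g n X D - FX g n X q\<bar> \<le> L * u" .
  have fx_meas: "(\<lambda>y. fx g y E) \<in> borel_measurable P" for E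
    unfolding measurable_sets_eq_borel_cong[OF P] by (rule borel_measurable_fx)
  have "\<bar>Ef g P D - Ef g P q\<bar> \<le> integral\<^sup>L P (lip_weight gbar) * u"
    unfolding Ef_def by (rule abs_integral_diff_le[OF fx_meas fx_meas w(1,3) \<open>0 \<le> u\<close> lip_u])
  also have "\<dots> \<le> L * u" using w(2) \<open>0 \<le> u\<close> by (rule mult_right_mono)
  finally have expectation: "\<bar>Ef g P D - Ef g P q\<bar> \<le> L * u" .
  from sample expectation dev show ?thesis unfolding u_def by linarith
qed

end

lemma (in nonneg_penalty) uniform_deviation_bound:
  fixes DD :: "(real^'d^'m) set" and gbar :: "real \<Rightarrow> real" and D0 a K2 :: real
    and P :: "(real^'m) measure" and c :: real and T :: ereal and C h L :: real and n :: nat and x :: real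
  assumes gbar: "gbar \<in> borel_measurable borel" "\<And>t. 0 \<le> t \<Longrightarrow> 0 \<le> gbar t"
    and lip: "\<And>y D1 D2. D1 \<in> DD \<Longrightarrow> D2 \<in> DD \<Longrightarrow> \<bar>fx g y D1 - fx g y D2\<bar>
       \<le> lip_weight gbar y * (norm12 (D1 - D2) + K2 * (norm12 (D1 - D2))\<^sup>2)"
    and K2: "0 \<le> K2" "K2\<^sup>2 \<le> D0" and D0: "1 \<le> D0" and a: "2 \<le> a" "K2 = 0 \<or> 3 \<le> a"
    and P: "prob_space P" "sets P = sets borel"
    and C2: "condC2 g DD P c T" and c_pos: "0 < c" and T_pos: "0 < T"
    and C_ge: "1 \<le> C" and h_ge: "1 \<le> h"
    and cover: "\<forall>eps. 0 < eps \<and> eps \<le> 1 \<longrightarrow> covering_number DD eps \<le> ereal ((C / eps) powr h)"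
    and L: "LP gbar P < ennreal L"
    and n1: "real n / ln (real n) \<ge> 8"
    and n3: "real n / ln (real n) \<ge> D0 * (c / (2 * L))\<^sup>2 * (h * max (ln (2 * L * C / c)) 1)"
    and x: "0 \<le> x" "T = \<infinity> \<or> x \<le> real n * (real_of_ereal T)\<^sup>2 - h * max (ln (2 * L * C / c)) 1 * ln (real n)"
  shows "\<exists>E \<in> sets (sample P n).
           measure (sample P n) E \<le> Lambda gbar P n L + 2 * exp (- x) \<and>
           (\<forall>X \<in> space (sample P n) - E. \<forall>D \<in> DD.
              \<bar>FX g n X D - Ef g P D\<bar> \<le>
                a * c * sqrt (h * max (ln (2 * L * C / c)) 1 * ln (real n) / real n)
                + c * sqrt ((h * max (ln (2 * L * C / c)) 1 + x) / real n))"
proof -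
  define \<beta> where "\<beta> = h * max (ln (2 * L * C / c)) 1"
  define s where "s = sqrt (\<beta> * ln (real n) / real n)"
  have L_pos: "0 < L" using L by (metis ennreal_less_zero_iff le_less_trans not_less zero_le)
  define \<epsilon> where "\<epsilon> = c * s / (2 * L)"
  define H where "H = h * ln (C / \<epsilon>)"
  define \<tau> where "\<tau> = sqrt ((x + H) / real n)"
  have n: "2 \<le> n" "2 \<le> ln (real n)" using two_le_ln_if_div_ln_ge_8[OF n1] by auto
  have \<beta>: "1 \<le> \<beta>" unfolding \<beta>_def using h_ge mult_mono[of 1 h 1 "max (ln (2 * L * C / c)) 1"] by simp
  have \<epsilon>: "0 < \<epsilon>" "D0 * \<epsilon>\<^sup>2 \<le> 1" "\<epsilon> \<le> 1"
    using covering_radius_bounds[OF n1 n3[folded \<beta>_def] c_pos L_pos \<beta> D0] unfolding \<epsilon>_def s_def by auto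
  have H: "0 \<le> H" "H \<le> \<beta> * ln (real n)"
  proof -
    have "1 \<le> C / \<epsilon>" using \<epsilon>(1,3) C_ge by (simp add: field_simps)
    then show "0 \<le> H" unfolding H_def using h_ge by simp
    show "H \<le> \<beta> * ln (real n)"
      unfolding H_def \<epsilon>_def s_def by (rule log_covering_number_le[OF n1 c_pos L_pos C_ge h_ge \<beta>_def refl])
  qed
  have \<tau>: "0 \<le> \<tau>" "ereal \<tau> \<le> T"
    using x H n T_pos unfolding \<tau>_def \<beta>_def[symmetric]
    by (auto intro!: ereal_sqrt_deviation_level_le)
  obtain Q where Q: "Q \<subseteq> DD" "finite Q" "\<forall>D\<in>DD. \<exists>q\<in>Q. norm12 (D - q) \<le> \<epsilon>"
      "real (card Q) \<le> (C / \<epsilon>) powr h"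
    using covering_number_le_imp_cover cover \<epsilon>(1,3) by metis
  define E where "E = {X \<in> space (sample P n).
             L < LX gbar n X \<or> (\<exists>q\<in>Q. c * \<tau> < \<bar>FX g n X q - Ef g P q\<bar>)}"
  note E = measure_net_deviation_event_le[OF P gbar(1) Q(2,1) C2 \<tau>, of n L, folded E_def]
  have "(C / \<epsilon>) powr h * exp (- real n * \<tau>\<^sup>2) = exp (- x)"
    using \<epsilon> C_ge x H n unfolding \<tau>_def H_def by (simp add: powr_def exp_add[symmetric])
  then have "measure (sample P n) E \<le> Lambda gbar P n L + 2 * exp (- x)"
    using E(2) Q(4) mult_right_mono[OF Q(4), of "2 * exp (- real n * \<tau>\<^sup>2)"] by simp
  moreover have "\<bar>FX g n X D - Ef g P D\<bar> \<le> a * c * s + c * sqrt ((\<beta> + x) / real n)"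
    if X: "X \<in> space (sample P n) - E" and D: "D \<in> DD" for X D
  proof -
    obtain q where q: "q \<in> Q" "norm12 (D - q) \<le> \<epsilon>" using Q(3) D by blast
    have cs: "2 * L * \<epsilon> = c * s" unfolding \<epsilon>_def using L_pos by simp
    moreover have "0 \<le> c * s" using \<epsilon>(1) L_pos unfolding cs[symmetric] by simp
    ultimately have "2 * L * (\<epsilon> + K2 * \<epsilon>\<^sup>2) \<le> (a - 1) * (c * s)"
      by (rule net_modulus_le[OF _ _ \<epsilon>(1) K2 \<epsilon>(2) a])
    moreover have "c * \<tau> \<le> c * sqrt ((\<beta> + x) / real n) + c * s"
      using sqrt_deviation_level_le[of n x \<beta> H] x n H \<beta> c_pos
      unfolding \<tau>_def s_def by (simp add: distrib_left[symmetric])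
    moreover have "\<bar>FX g n X D - Ef g P D\<bar> \<le> 2 * L * (\<epsilon> + K2 * \<epsilon>\<^sup>2) + c * \<tau>"
      using X D q Q(1) unfolding E_def
      by (intro deviation_le_via_net_point[OF P(2) integrable_lip_weight[OF P(2) gbar L]
            lip_weight_nonneg[of gbar, OF gbar(2)] lip K2(1)]) auto
    ultimately show ?thesis by (simp add: algebra_simps)
  qed
  ultimately show ?thesis using E(1) unfolding s_def \<beta>_def by blast
qed

lemma scenario_imp_lipschitz:
  assumes "scenario g DD gbar D0 a"
  obtains K2 where "nonneg_penalty g" "gbar \<in> borel_measurable borel" "\<And>t. 0 \<le> t \<Longrightarrow> 0 \<le> gbar t"
    "0 \<le> K2" "K2\<^sup>2 \<le> D0" "1 \<le> D0" "2 \<le> a" "K2 = 0 \<or> 3 \<le> a"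
    "\<And>y D1 D2. D1 \<in> DD \<Longrightarrow> D2 \<in> DD \<Longrightarrow> \<bar>fx g y D1 - fx g y D2\<bar>
       \<le> lip_weight gbar y * (norm12 (D1 - D2) + K2 * (norm12 (D1 - D2))\<^sup>2)"
  using assms unfolding scenario_def
proof (elim disjE exE conjE)
  assume A: "assmA g" and gbar: "gbar = gbarA g" and "D0 = 1" "a = 2"
  interpret coercive_penalty g by (rule assmA_imp_coercive_penalty[OF A])
  show thesis
    by (rule that[of 0]) (use \<open>D0 = 1\<close> \<open>a = 2\<close> in \<open>auto simp: gbar lip_weight_def
        nonneg_penalty_axioms borel_measurable_mono mono_gbarA gbarA_nonneg fx_lipschitz_dictionary\<close>)
next
  fix \<kappa> assume B: "assmB123 g DD \<kappa>" and "convex DD" and gbar: "gbar = gbarB \<kappa>" and "D0 = 1" "a = 2"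
  interpret indicator_penalty g DD \<kappa> by (rule indicator_penalty.intro[OF B])
  show thesis
    by (rule that[of 0]) (use \<open>D0 = 1\<close> \<open>a = 2\<close> \<open>convex DD\<close> kappa_pos in \<open>auto simp: gbar
        lip_weight_def borel_measurable_gbarB gbarB_nonneg nonneg_penalty_axioms
        fx_lipschitz_dictionary_convex\<close>)
next
  fix \<kappa> assume B: "assmB123 g DD \<kappa>" and gbar: "gbar = gbarB \<kappa>" and "D0 = max (1 / \<kappa>) 1" "a = 3"
  interpret indicator_penalty g DD \<kappa> by (rule indicator_penalty.intro[OF B])
  show thesis
    by (rule that[of "1 / sqrt \<kappa>"]) (use \<open>D0 = max (1 / \<kappa>) 1\<close> \<open>a = 3\<close> kappa_pos in \<open>auto simp: gbar
        lip_weight_def borel_measurable_gbarB gbarB_nonneg power_divide nonneg_penalty_axioms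
        fx_lipschitz_dictionary\<close>)
qed

theorem theorem1:
  fixes g :: "real^'d \<Rightarrow> ereal" and DD :: "(real^'d^'m) set"
    and gbar :: "real \<Rightarrow> real" and D0 a :: real
    and P :: "(real^'m) measure"
    and c :: real and T :: ereal and C h L :: real and n :: nat and x :: real
  assumes pen: "is_penalty g"
    and scen: "scenario g DD gbar D0 a"
    and P: "prob_space P" "sets P = sets borel"
    and C1: "LP gbar P < \<infinity>"
    and C2: "condC2 g DD P c T" and c_pos: "0 < c" and T_pos: "0 < T"
    and C_ge: "1 \<le> C" and h_ge: "1 \<le> h"
    and cover: "\<forall>eps. 0 < eps \<and> eps \<le> 1 \<longrightarrow> covering_number DD eps \<le> ereal ((C / eps) powr h)"
    and L: "LP gbar P < ennreal L"
    and n1: "real n / ln (real n) \<ge> 8"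
    and n2: "T = \<infinity> \<or> real n / ln (real n) \<ge>
               h * max (ln (2 * L * C / c)) 1 / (real_of_ereal T)\<^sup>2"
    and n3: "real n / ln (real n) \<ge> D0 * (c / (2 * L))\<^sup>2 * (h * max (ln (2 * L * C / c)) 1)"
    and x: "0 \<le> x" "T = \<infinity> \<or> x \<le> real n * (real_of_ereal T)\<^sup>2 - h * max (ln (2 * L * C / c)) 1 * ln (real n)"
  shows "\<exists>E \<in> sets (sample P n).
           measure (sample P n) E \<le> Lambda gbar P n L + 2 * exp (- x) \<and>
           (\<forall>X \<in> space (sample P n) - E. \<forall>D \<in> DD.
              \<bar>FX g n X D - Ef g P D\<bar> \<le>
                a * c * sqrt (h * max (ln (2 * L * C / c)) 1 * ln (real n) / real n)
                + c * sqrt ((h * max (ln (2 * L * C / c)) 1 + x) / real n))"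
proof -
  obtain K2 where g: "nonneg_penalty g" and gbar: "gbar \<in> borel_measurable borel" "\<And>t. 0 \<le> t \<Longrightarrow> 0 \<le> gbar t"
    and K2: "0 \<le> K2" "K2\<^sup>2 \<le> D0" "1 \<le> D0" "2 \<le> a" "K2 = 0 \<or> 3 \<le> a"
    and lip: "\<And>y D1 D2. D1 \<in> DD \<Longrightarrow> D2 \<in> DD \<Longrightarrow> \<bar>fx g y D1 - fx g y D2\<bar>
       \<le> lip_weight gbar y * (norm12 (D1 - D2) + K2 * (norm12 (D1 - D2))\<^sup>2)"
    using scenario_imp_lipschitz[OF scen] by metis
  show ?thesis
    by (rule nonneg_penalty.uniform_deviation_bound[OF g gbar lip K2 P C2 c_pos T_pos C_ge h_ge cover L n1 n3 x])
qed

end
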